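(* For every WHB-algebra $\mathbf A$, the congruence lattice $\mathrm{Con}_{\mathcal{WHB}}(\mathbf A)$ of $\mathbf A$ is isomorphic to the congruence lattice $\mathrm{Con}_{\mathcal{TBA}}(T(\mathbf A))$ of the tense algebra $T(\mathbf A)$.
   Context: A WHB-algebra is an algebra $(A,\wedge,\vee,\to,\leftarrow,0,1)$ such that $(A,\wedge,\vee,0,1)$ is a bounded distributive lattice and for all $a,b,c\in A$: $a\to a=1$; $a\to(b\wedge c)=(a\to b)\wedge(a\to c)$; $(a\vee b)\to c=(a\to c)\wedge(b\to c)$; $(a\to b)\wedge(b\to c)\le a\to c$; $a\leftarrow a=0$; $(a\vee b)\leftarrow c=(a\leftarrow c)\vee(b\leftarrow c)$; $a\leftarrow(b\wedge c)=(a\leftarrow b)\vee(a\leftarrow c)$; $a\leftarrow c\le(a\leftarrow b)\vee(b\leftarrow c)$; $a\wedge((a\to b)\leftarrow 0)\le b$; $a\le b\vee(1\to(a\leftarrow b))$. A tense algebra is $(\mathbf B,G,H)$ with $\mathbf B$ a Boolean algebra and unary $G,H$ such that, with $P(x)=\neg H(\neg x)$, $F(x)=\neg G(\neg x)$: $P(x)\le y\iff x\le G(y)$ and $F(x)\le y\iff x\le H(y)$. For a WHB-algebra $\mathbf A$: $X(\mathbf A)$ is its set of prime filters, $\sigma_{\mathbf A}(a)=\{P\colon a\in P\}$, $\tau_{\mathbf A}$ the topology with subbase $\{\sigma_{\mathbf A}(a)\}\cup\{X(\mathbf A)\setminus\sigma_{\mathbf A}(a)\}$; $(P,Q)\in R_{\mathbf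 A}$ iff for all $a,b$ ($a\to b\in P$, $a\in Q$ imply $b\in Q$); $(P,Q)\in S_{\mathbf A}$ iff for all $a,b$ ($a\in Q$, $b\notin Q$ imply $a\leftarrow b\in P$). $T(\mathbf A)$ is the Boolean algebra of $\tau_{\mathbf A}$-clopen subsets of $X(\mathbf A)$ with $G_{\mathbf A}(U)=\{P\colon R_{\mathbf A}(P)\subseteq U\}$ and $H_{\mathbf A}(U)=\{P\colon S_{\mathbf A}(P)\subseteq U\}$, where $\mathcal R(P)=\{Q\colon(P,Q)\in\mathcal R\}$. *)

theory Defs
  imports "HOL-Analysis.Analysis"
begin

section \<open>WHB-algebras (carrier = the whole type 'a)\<close>

record 'a whb =
  wmeet :: "'a \<Rightarrow> 'a \<Rightarrow> 'a"
  wjoin :: "'a \<Rightarrow> 'a \<Rightarrow> 'a"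
  wimp  :: "'a \<Rightarrow> 'a \<Rightarrow> 'a"
  wcoimp :: "'a \<Rightarrow> 'a \<Rightarrow> 'a"
  wzero :: 'a
  wone  :: 'a

definition wle :: "'a whb \<Rightarrow> 'a \<Rightarrow> 'a \<Rightarrow> bool" where
  "wle A x y \<longleftrightarrow> wmeet A x y = x"

definition bdl :: "'a whb \<Rightarrow> bool" where
  "bdl A \<longleftrightarrow>
    (\<forall>x y z. wmeet A x (wmeet A y z) = wmeet A (wmeet A x y) z) \<and>
    (\<forall>x y z. wjoin A x (wjoin A y z) = wjoin A (wjoin A x y) z) \<and>
    (\<forall>x y. wmeet A x y = wmeet A y x) \<and>
    (\<forall>x y. wjoin A x y = wjoin A y x) \<and>
    (\<forall>x y. wmeet A x (wjoin A x y) = x) \<and>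
    (\<forall>x y. wjoin A x (wmeet A x y) = x) \<and>
    (\<forall>x y z. wmeet A x (wjoin A y z) = wjoin A (wmeet A x y) (wmeet A x z)) \<and>
    (\<forall>x. wmeet A (wzero A) x = wzero A) \<and>
    (\<forall>x. wmeet A (wone A) x = x)"

definition WHB_algebra :: "'a whb \<Rightarrow> bool" where
  "WHB_algebra A \<longleftrightarrow> bdl A \<and>
    (\<forall>a. wimp A a a = wone A) \<and>
    (\<forall>a b c. wimp A a (wmeet A b c) = wmeet A (wimp A a b) (wimp A a c)) \<and>
    (\<forall>a b c. wimp A (wjoin A a b) c = wmeet A (wimp A a c) (wimp A b c)) \<and>
    (\<forall>a b c. wle A (wmeet A (wimp A a b) (wimp A b c)) (wimp A a c)) \<and>
    (\<forall>a. wcoimp A a a = wzero A) \<and>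
    (\<forall>a b c. wcoimp A (wjoin A a b) c = wjoin A (wcoimp A a c) (wcoimp A b c)) \<and>
    (\<forall>a b c. wcoimp A a (wmeet A b c) = wjoin A (wcoimp A a b) (wcoimp A a c)) \<and>
    (\<forall>a b c. wle A (wcoimp A a c) (wjoin A (wcoimp A a b) (wcoimp A b c))) \<and>
    (\<forall>a b. wle A (wmeet A a (wcoimp A (wimp A a b) (wzero A))) b) \<and>
    (\<forall>a b. wle A a (wjoin A b (wimp A (wone A) (wcoimp A a b))))"

definition prime_filter :: "'a whb \<Rightarrow> 'a set \<Rightarrow> bool" where
  "prime_filter A P \<longleftrightarrow>
     wone A \<in> P \<and> wzero A \<notin> P \<and>
     (\<forall>a b. a \<in> P \<longrightarrow> wle A a b \<longrightarrow> b \<in> P) \<and>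
     (\<forall>a b. a \<in> P \<longrightarrow> b \<in> P \<longrightarrow> wmeet A a b \<in> P) \<and>
     (\<forall>a b. wjoin A a b \<in> P \<longrightarrow> a \<in> P \<or> b \<in> P)"

definition Xp :: "'a whb \<Rightarrow> 'a set set" where
  "Xp A = {P. prime_filter A P}"

definition sigmaA :: "'a whb \<Rightarrow> 'a \<Rightarrow> 'a set set" where
  "sigmaA A a = {P \<in> Xp A. a \<in> P}"

definition tauA :: "'a whb \<Rightarrow> 'a set topology" where
  "tauA A = topology_generated_by
     (range (sigmaA A) \<union> (\<lambda>a. Xp A - sigmaA A a) ` UNIV)"

definition RA :: "'a whb \<Rightarrow> ('a set \<times> 'a set) set" where
  "RA A = {(P, Q). P \<in> Xp A \<and> Q \<in> Xp A \<and>
     (\<forall>a b. wimp A a b \<in> P \<longrightarrow> a \<in> Q \<longrightarrow> b \<in> Q)}"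

definition SA :: "'a whb \<Rightarrow> ('a set \<times> 'a set) set" where
  "SA A = {(P, Q). P \<in> Xp A \<and> Q \<in> Xp A \<and>
     (\<forall>a b. a \<in> Q \<longrightarrow> b \<notin> Q \<longrightarrow> wcoimp A a b \<in> P)}"

record 'b tba =
  tcar  :: "'b set"
  tmeet :: "'b \<Rightarrow> 'b \<Rightarrow> 'b"
  tjoin :: "'b \<Rightarrow> 'b \<Rightarrow> 'b"
  tneg  :: "'b \<Rightarrow> 'b"
  tzero :: 'b
  tone  :: 'b
  tG    :: "'b \<Rightarrow> 'b"
  tH    :: "'b \<Rightarrow> 'b"

definition TA :: "'a whb \<Rightarrow> 'a set set tba" where
  "TA A = \<lparr> tcar = {U. openin (tauA A) U \<and> closedin (tauA A) U},
            tmeet = (\<inter>), tjoin = (\<union>), tneg = (\<lambda>U. Xp A - U),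
            tzero = {}, tone = Xp A,
            tG = (\<lambda>U. {P \<in> Xp A. RA A `` {P} \<subseteq> U}),
            tH = (\<lambda>U. {P \<in> Xp A. SA A `` {P} \<subseteq> U}) \<rparr>"

definition Con_WHB :: "'a whb \<Rightarrow> ('a \<times> 'a) set set" where
  "Con_WHB A = {\<theta>. equiv UNIV \<theta> \<and>
     (\<forall>a b c d. (a, b) \<in> \<theta> \<longrightarrow> (c, d) \<in> \<theta> \<longrightarrow>
        (wmeet A a c, wmeet A b d) \<in> \<theta> \<and> (wjoin A a c, wjoin A b d) \<in> \<theta> \<and>
        (wimp A a c, wimp A b d) \<in> \<theta> \<and> (wcoimp A a c, wcoimp A b d) \<in> \<theta>)}"

definition Con_TBA :: "'b tba \<Rightarrow> ('b \<times> 'b) set set" where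
  "Con_TBA B = {\<theta>. equiv (tcar B) \<theta> \<and>
     (\<forall>a b c d. (a, b) \<in> \<theta> \<longrightarrow> (c, d) \<in> \<theta> \<longrightarrow>
        (tmeet B a c, tmeet B b d) \<in> \<theta> \<and> (tjoin B a c, tjoin B b d) \<in> \<theta>) \<and>
     (\<forall>a b. (a, b) \<in> \<theta> \<longrightarrow>
        (tneg B a, tneg B b) \<in> \<theta> \<and> (tG B a, tG B b) \<in> \<theta> \<and> (tH B a, tH B b) \<in> \<theta>)}"

definition con_join :: "('c \<times> 'c) set set \<Rightarrow> ('c \<times> 'c) set \<Rightarrow> ('c \<times> 'c) set \<Rightarrow> ('c \<times> 'c) set" where
  "con_join L \<theta> \<psi> = \<Inter>{\<phi> \<in> L. \<theta> \<union> \<psi> \<subseteq> \<phi>}"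

definition lattice_iso ::
  "('c \<times> 'c) set set \<Rightarrow> ('d \<times> 'd) set set \<Rightarrow> (('c \<times> 'c) set \<Rightarrow> ('d \<times> 'd) set) \<Rightarrow> bool" where
  "lattice_iso L M f \<longleftrightarrow> bij_betw f L M \<and>
     (\<forall>\<theta>\<in>L. \<forall>\<psi>\<in>L. f (\<theta> \<inter> \<psi>) = f \<theta> \<inter> f \<psi> \<and>
                    f (con_join L \<theta> \<psi>) = con_join M (f \<theta>) (f \<psi>))"

end

theory Submission
  imports Defs
begin

(* A congruence \<theta> of A is recorded in the dual space by the set Y of prime filters closed
   under \<theta>.  Y is invariant under R and S, so "U and V agree on Y" is a congruence of T(A);
   conversely a congruence \<phi> of T(A) induces {(a, b). (\<sigma> a, \<sigma> b) \<in> \<phi>} on A.  The two maps are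
   mutually inverse for two reasons.  Points of Y separate a from b whenever (a, meet a b) \<notin> \<theta>,
   by a prime filter theorem for filters closed under the preorder "(u, meet u v) \<in> \<theta>".  And a
   congruence of the Boolean algebra T(A) is determined by the class of the top element, which by
   compactness of the dual space consists exactly of the clopens containing Y. *)

definition rel_box :: "'b set \<Rightarrow> ('b \<times> 'b) set \<Rightarrow> 'b set \<Rightarrow> 'b set" where
  "rel_box X R U = {P \<in> X. R `` {P} \<subseteq> U}"

lemma rel_box_Inter:
  assumes "R `` X \<subseteq> X"
  shows "rel_box X R (X \<inter> \<Inter>\<U>) = X \<inter> \<Inter>(rel_box X R ` \<U>)"
  using assms unfolding rel_box_def by blast

lemma rel_box_eq_on_invariant:
  assumes "R `` Y \<subseteq> Y" "U \<inter> Y = V \<inter> Y"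
  shows "rel_box X R U \<inter> Y = rel_box X R V \<inter> Y"
  using assms unfolding rel_box_def by blast

lemma con_join_lub:
  assumes Inter: "\<forall>S\<subseteq>L. S \<noteq> {} \<longrightarrow> \<Inter>S \<in> L"
    and "t \<in> L" "\<forall>\<phi>\<in>L. \<phi> \<subseteq> t"
    and "\<theta> \<in> L" "\<psi> \<in> L"
  shows "con_join L \<theta> \<psi> \<in> L" "\<theta> \<union> \<psi> \<subseteq> con_join L \<theta> \<psi>"
    "\<And>\<phi>. \<phi> \<in> L \<Longrightarrow> \<theta> \<union> \<psi> \<subseteq> \<phi> \<Longrightarrow> con_join L \<theta> \<psi> \<subseteq> \<phi>"
proof -
  have "t \<in> {\<phi> \<in> L. \<theta> \<union> \<psi> \<subseteq> \<phi>}" using assms by blast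
  then show "con_join L \<theta> \<psi> \<in> L" unfolding con_join_def
    using Inter[rule_format, of "{\<phi> \<in> L. \<theta> \<union> \<psi> \<subseteq> \<phi>}"] by blast
qed (auto simp: con_join_def)

context
  fixes L :: "('c \<times> 'c) set set" and M :: "('d \<times> 'd) set set"
    and f :: "('c \<times> 'c) set \<Rightarrow> ('d \<times> 'd) set" and g :: "('d \<times> 'd) set \<Rightarrow> ('c \<times> 'c) set"
    and s :: "('c \<times> 'c) set" and t :: "('d \<times> 'd) set"
  assumes fL: "\<And>\<theta>. \<theta> \<in> L \<Longrightarrow> f \<theta> \<in> M" and gM: "\<And>\<phi>. \<phi> \<in> M \<Longrightarrow> g \<phi> \<in> L"
    and gf: "\<And>\<theta>. \<theta> \<in> L \<Longrightarrow> g (f \<theta>) = \<theta>" and fg: "\<And>\<phi>. \<phi> \<in> M \<Longrightarrow> f (g \<phi>) = \<phi>"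
    and f_mono: "\<And>\<theta> \<theta>'. \<theta> \<in> L \<Longrightarrow> \<theta>' \<in> L \<Longrightarrow> \<theta> \<subseteq> \<theta>' \<Longrightarrow> f \<theta> \<subseteq> f \<theta>'"
    and g_mono: "\<And>\<phi> \<phi>'. \<phi> \<in> M \<Longrightarrow> \<phi>' \<in> M \<Longrightarrow> \<phi> \<subseteq> \<phi>' \<Longrightarrow> g \<phi> \<subseteq> g \<phi>'"
    and L_Inter: "\<forall>S\<subseteq>L. S \<noteq> {} \<longrightarrow> \<Inter>S \<in> L" and L_top: "s \<in> L" "\<forall>\<theta>\<in>L. \<theta> \<subseteq> s"
    and M_Inter: "\<forall>S\<subseteq>M. S \<noteq> {} \<longrightarrow> \<Inter>S \<in> M" and M_top: "t \<in> M" "\<forall>\<phi>\<in>M. \<phi> \<subseteq> t"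
begin

lemma order_iso_adjoint: "\<theta> \<in> L \<Longrightarrow> \<phi> \<in> M \<Longrightarrow> f \<theta> \<subseteq> \<phi> \<longleftrightarrow> \<theta> \<subseteq> g \<phi>"
  by (metis f_mono g_mono gf fg fL gM)

lemma order_iso_Int:
  assumes \<theta>\<psi>: "\<theta> \<in> L" "\<psi> \<in> L"
  shows "f (\<theta> \<inter> \<psi>) = f \<theta> \<inter> f \<psi>"
proof (rule antisym)
  have L_Int: "\<theta> \<inter> \<psi> \<in> L" using L_Inter[rule_format, of "{\<theta>, \<psi>}"] \<theta>\<psi> by simp
  have \<phi>: "f \<theta> \<inter> f \<psi> \<in> M" using M_Inter[rule_format, of "{f \<theta>, f \<psi>}"] fL \<theta>\<psi> by simp
  show "f (\<theta> \<inter> \<psi>) \<subseteq> f \<theta> \<inter> f \<psi>"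
    using f_mono[OF L_Int \<theta>\<psi>(1)] f_mono[OF L_Int \<theta>\<psi>(2)] by blast
  have "g (f \<theta> \<inter> f \<psi>) \<subseteq> g (f \<theta>)" "g (f \<theta> \<inter> f \<psi>) \<subseteq> g (f \<psi>)"
    using g_mono[OF \<phi> fL[OF \<theta>\<psi>(1)]] g_mono[OF \<phi> fL[OF \<theta>\<psi>(2)]] by simp_all
  then have "g (f \<theta> \<inter> f \<psi>) \<subseteq> \<theta> \<inter> \<psi>" using gf \<theta>\<psi> by simp
  then show "f \<theta> \<inter> f \<psi> \<subseteq> f (\<theta> \<inter> \<psi>)"
    using f_mono[OF gM[OF \<phi>] L_Int] fg[OF \<phi>] by simp
qed

lemma order_iso_con_join:
  assumes \<theta>\<psi>: "\<theta> \<in> L" "\<psi> \<in> L"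
  shows "f (con_join L \<theta> \<psi>) = con_join M (f \<theta>) (f \<psi>)"
proof (rule antisym)
  note J = con_join_lub[OF L_Inter L_top \<theta>\<psi>]
  note K = con_join_lub[OF M_Inter M_top fL[OF \<theta>\<psi>(1)] fL[OF \<theta>\<psi>(2)]]
  have "\<theta> \<subseteq> g (con_join M (f \<theta>) (f \<psi>))" "\<psi> \<subseteq> g (con_join M (f \<theta>) (f \<psi>))"
    using order_iso_adjoint[OF \<theta>\<psi>(1) K(1)] order_iso_adjoint[OF \<theta>\<psi>(2) K(1)] K(2) by simp_all
  then have "con_join L \<theta> \<psi> \<subseteq> g (con_join M (f \<theta>) (f \<psi>))"
    using J(3)[OF gM[OF K(1)]] by simp
  then show "f (con_join L \<theta> \<psi>) \<subseteq> con_join M (f \<theta>) (f \<psi>)"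
    using order_iso_adjoint[OF J(1) K(1)] by simp
  have "f \<theta> \<subseteq> f (con_join L \<theta> \<psi>)" "f \<psi> \<subseteq> f (con_join L \<theta> \<psi>)"
    using f_mono[OF \<theta>\<psi>(1) J(1)] f_mono[OF \<theta>\<psi>(2) J(1)] J(2) by simp_all
  then show "con_join M (f \<theta>) (f \<psi>) \<subseteq> f (con_join L \<theta> \<psi>)"
    using K(3)[OF fL[OF J(1)]] by simp
qed

lemma lattice_iso_if_order_iso: "lattice_iso L M f"
proof -
  have "bij_betw f L M"
    using gf fg fL gM by (intro bij_betw_byWitness[where f' = g]) auto
  then show ?thesis unfolding lattice_iso_def by (simp add: order_iso_Int order_iso_con_join)
qed

end

lemma Con_WHB_refl: "\<theta> \<in> Con_WHB A \<Longrightarrow> (a, a) \<in> \<theta>"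
  and Con_WHB_sym: "\<theta> \<in> Con_WHB A \<Longrightarrow> (a, b) \<in> \<theta> \<Longrightarrow> (b, a) \<in> \<theta>"
  and Con_WHB_trans: "\<theta> \<in> Con_WHB A \<Longrightarrow> (a, b) \<in> \<theta> \<Longrightarrow> (b, c) \<in> \<theta> \<Longrightarrow> (a, c) \<in> \<theta>"
  unfolding Con_WHB_def equiv_def refl_on_def sym_def trans_def by blast+

lemma Con_WHB_meet: "\<theta> \<in> Con_WHB A \<Longrightarrow> (a, b) \<in> \<theta> \<Longrightarrow> (c, d) \<in> \<theta> \<Longrightarrow> (wmeet A a c, wmeet A b d) \<in> \<theta>"
  and Con_WHB_join: "\<theta> \<in> Con_WHB A \<Longrightarrow> (a, b) \<in> \<theta> \<Longrightarrow> (c, d) \<in> \<theta> \<Longrightarrow> (wjoin A a c, wjoin A b d) \<in> \<theta>"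
  and Con_WHB_imp: "\<theta> \<in> Con_WHB A \<Longrightarrow> (a, b) \<in> \<theta> \<Longrightarrow> (c, d) \<in> \<theta> \<Longrightarrow> (wimp A a c, wimp A b d) \<in> \<theta>"
  and Con_WHB_coimp: "\<theta> \<in> Con_WHB A \<Longrightarrow> (a, b) \<in> \<theta> \<Longrightarrow> (c, d) \<in> \<theta> \<Longrightarrow> (wcoimp A a c, wcoimp A b d) \<in> \<theta>"
  unfolding Con_WHB_def by blast+

lemma Con_WHB_Inter:
  assumes "S \<subseteq> Con_WHB A"
  shows "\<Inter>S \<in> Con_WHB A"
proof -
  have con: "\<theta> \<in> Con_WHB A" if "\<theta> \<in> S" for \<theta> using assms that by blast
  have "equiv UNIV (\<Inter>S)"
  proof (rule equivI)
    show "refl (\<Inter>S)" unfolding refl_on_def using Con_WHB_refl[OF con] by blast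
    show "sym (\<Inter>S)" by (rule symI) (use Con_WHB_sym[OF con] in blast)
    show "trans (\<Inter>S)" by (rule transI) (use Con_WHB_trans[OF con] in blast)
  qed simp
  moreover have "(wmeet A a c, wmeet A b d) \<in> \<Inter>S" "(wjoin A a c, wjoin A b d) \<in> \<Inter>S"
    "(wimp A a c, wimp A b d) \<in> \<Inter>S" "(wcoimp A a c, wcoimp A b d) \<in> \<Inter>S"
    if "(a, b) \<in> \<Inter>S" "(c, d) \<in> \<Inter>S" for a b c d
    using that
    by (auto intro: Con_WHB_meet[OF con] Con_WHB_join[OF con] Con_WHB_imp[OF con] Con_WHB_coimp[OF con])
  ultimately show ?thesis unfolding Con_WHB_def mem_Collect_eq by simp
qed

lemma UNIV_Con_WHB: "UNIV \<in> Con_WHB A"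
  unfolding Con_WHB_def equiv_def refl_on_def sym_def trans_def by simp

lemma Con_TBA_carrier: "\<phi> \<in> Con_TBA B \<Longrightarrow> (U, V) \<in> \<phi> \<Longrightarrow> U \<in> tcar B \<and> V \<in> tcar B"
  and Con_TBA_refl: "\<phi> \<in> Con_TBA B \<Longrightarrow> U \<in> tcar B \<Longrightarrow> (U, U) \<in> \<phi>"
  and Con_TBA_sym: "\<phi> \<in> Con_TBA B \<Longrightarrow> (U, V) \<in> \<phi> \<Longrightarrow> (V, U) \<in> \<phi>"
  and Con_TBA_trans: "\<phi> \<in> Con_TBA B \<Longrightarrow> (U, V) \<in> \<phi> \<Longrightarrow> (V, W) \<in> \<phi> \<Longrightarrow> (U, W) \<in> \<phi>"
  unfolding Con_TBA_def equiv_def by (auto dest: refl_onD symD transD)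

lemma Con_TBA_meet: "\<phi> \<in> Con_TBA B \<Longrightarrow> (U, V) \<in> \<phi> \<Longrightarrow> (U', V') \<in> \<phi> \<Longrightarrow> (tmeet B U U', tmeet B V V') \<in> \<phi>"
  and Con_TBA_join: "\<phi> \<in> Con_TBA B \<Longrightarrow> (U, V) \<in> \<phi> \<Longrightarrow> (U', V') \<in> \<phi> \<Longrightarrow> (tjoin B U U', tjoin B V V') \<in> \<phi>"
  and Con_TBA_neg: "\<phi> \<in> Con_TBA B \<Longrightarrow> (U, V) \<in> \<phi> \<Longrightarrow> (tneg B U, tneg B V) \<in> \<phi>"
  and Con_TBA_G: "\<phi> \<in> Con_TBA B \<Longrightarrow> (U, V) \<in> \<phi> \<Longrightarrow> (tG B U, tG B V) \<in> \<phi>"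
  and Con_TBA_H: "\<phi> \<in> Con_TBA B \<Longrightarrow> (U, V) \<in> \<phi> \<Longrightarrow> (tH B U, tH B V) \<in> \<phi>"
  unfolding Con_TBA_def by blast+

lemma Con_TBA_Inter:
  assumes S: "S \<subseteq> Con_TBA B" "S \<noteq> {}"
  shows "\<Inter>S \<in> Con_TBA B"
proof -
  have con: "\<phi> \<in> Con_TBA B" if "\<phi> \<in> S" for \<phi> using S(1) that by blast
  obtain \<phi> where \<phi>: "\<phi> \<in> S" using S(2) by blast
  have "equiv (tcar B) (\<Inter>S)"
  proof (rule equivI)
    show "\<Inter>S \<subseteq> tcar B \<times> tcar B"
    proof
      fix p assume "p \<in> \<Inter>S"
      then have "p \<in> \<phi>" using \<phi> by blast
      then show "p \<in> tcar B \<times> tcar B" using Con_TBA_carrier[OF con[OF \<phi>]] by (cases p) blast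
    qed
    show "refl_on (tcar B) (\<Inter>S)" unfolding refl_on_def using Con_TBA_refl[OF con] by blast
    show "sym (\<Inter>S)" by (rule symI) (use Con_TBA_sym[OF con] in blast)
    show "trans (\<Inter>S)" by (rule transI) (use Con_TBA_trans[OF con] in blast)
  qed
  moreover have "(tmeet B U U', tmeet B V V') \<in> \<Inter>S" "(tjoin B U U', tjoin B V V') \<in> \<Inter>S"
    if "(U, V) \<in> \<Inter>S" "(U', V') \<in> \<Inter>S" for U V U' V'
    using that by (auto intro: Con_TBA_meet[OF con] Con_TBA_join[OF con])
  moreover have "(tneg B U, tneg B V) \<in> \<Inter>S" "(tG B U, tG B V) \<in> \<Inter>S" "(tH B U, tH B V) \<in> \<Inter>S"
    if "(U, V) \<in> \<Inter>S" for U V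
    using that by (auto intro: Con_TBA_neg[OF con] Con_TBA_G[OF con] Con_TBA_H[OF con])
  ultimately show ?thesis unfolding Con_TBA_def mem_Collect_eq by simp
qed

section \<open>Prime filters closed under a compatible preorder\<close>

locale weak_hb =
  fixes A :: "'a whb"
  assumes bdl: "bdl A"
    and imp_self: "wimp A a a = wone A"
    and imp_meet: "wimp A a (wmeet A b c) = wmeet A (wimp A a b) (wimp A a c)"
    and imp_join: "wimp A (wjoin A a b) c = wmeet A (wimp A a c) (wimp A b c)"
    and imp_trans: "wle A (wmeet A (wimp A a b) (wimp A b c)) (wimp A a c)"
    and coimp_self: "wcoimp A a a = wzero A"
    and coimp_join: "wcoimp A (wjoin A a b) c = wjoin A (wcoimp A a c) (wcoimp A b c)"
    and coimp_meet: "wcoimp A a (wmeet A b c) = wjoin A (wcoimp A a b) (wcoimp A a c)"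
    and coimp_trans: "wle A (wcoimp A a c) (wjoin A (wcoimp A a b) (wcoimp A b c))"
begin

abbreviation meet where "meet \<equiv> wmeet A"
abbreviation join where "join \<equiv> wjoin A"
abbreviation imp where "imp \<equiv> wimp A"
abbreviation coimp where "coimp \<equiv> wcoimp A"
abbreviation zero where "zero \<equiv> wzero A"
abbreviation one where "one \<equiv> wone A"
abbreviation le where "le \<equiv> wle A"
abbreviation X where "X \<equiv> Xp A"
abbreviation \<sigma> where "\<sigma> \<equiv> sigmaA A"
abbreviation \<tau> where "\<tau> \<equiv> tauA A"
abbreviation clopens where "clopens \<equiv> tcar (TA A)"

lemma meet_assoc: "meet x (meet y w) = meet (meet x y) w"
  and join_assoc: "join x (join y w) = join (join x y) w"
  and meet_comm: "meet x y = meet y x"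
  and join_comm: "join x y = join y x"
  and meet_absorb: "meet x (join x y) = x"
  and join_absorb: "join x (meet x y) = x"
  and meet_join_distrib: "meet x (join y w) = join (meet x y) (meet x w)"
  and zero_meet: "meet zero x = zero"
  and one_meet: "meet one x = x"
  using bdl unfolding bdl_def by blast+

sublocale L: distrib_lattice meet le "\<lambda>x y. le x y \<and> x \<noteq> y" join
proof -
  have meet_idem: "meet x x = x" for x by (metis join_absorb meet_absorb)
  have le_iff_join: "le x y \<longleftrightarrow> join x y = y" for x y
    unfolding wle_def by (metis join_absorb meet_absorb meet_comm join_comm)
  show "class.distrib_lattice meet le (\<lambda>x y. le x y \<and> x \<noteq> y) join"
  proof
    show "join x (meet y z) = meet (join x y) (join x z)" for x y z
      by (metis meet_join_distrib join_absorb meet_absorb meet_assoc meet_comm join_comm join_assoc)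
  qed (unfold wle_def; metis meet_idem meet_comm meet_assoc meet_absorb le_iff_join join_comm join_assoc wle_def)+
qed

lemma zero_le: "le zero x" unfolding wle_def by (rule zero_meet)
lemma le_one: "le x one" unfolding wle_def by (metis one_meet meet_comm)

lemma imp_eq_one_if_le: "le a b \<Longrightarrow> imp a b = one"
  by (metis L.inf_absorb1 imp_meet imp_self one_meet)
lemma coimp_eq_zero_if_le: "le a b \<Longrightarrow> coimp a b = zero"
  by (metis L.inf_absorb1 L.sup_absorb2 coimp_meet coimp_self zero_le)

definition is_filter :: "'a set \<Rightarrow> bool" where
  "is_filter F \<longleftrightarrow> one \<in> F \<and> (\<forall>a b. a \<in> F \<longrightarrow> le a b \<longrightarrow> b \<in> F) \<and>
     (\<forall>a b. a \<in> F \<longrightarrow> b \<in> F \<longrightarrow> meet a b \<in> F)"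

definition is_ideal :: "'a set \<Rightarrow> bool" where
  "is_ideal I \<longleftrightarrow> zero \<in> I \<and> (\<forall>a b. b \<in> I \<longrightarrow> le a b \<longrightarrow> a \<in> I) \<and>
     (\<forall>a b. a \<in> I \<longrightarrow> b \<in> I \<longrightarrow> join a b \<in> I)"

definition rel_closed :: "('a \<Rightarrow> 'a \<Rightarrow> bool) \<Rightarrow> 'a set \<Rightarrow> bool" where
  "rel_closed R F \<longleftrightarrow> (\<forall>u v. u \<in> F \<longrightarrow> R u v \<longrightarrow> v \<in> F)"

(* Instances: le itself; "imp u v \<in> P" and "coimp u v \<notin> P" for a prime filter P, whose closed
   prime filters are the R- and S-successors of P; and "(u, meet u v) \<in> \<theta>" for a congruence \<theta>. *)
definition compatible_preorder :: "('a \<Rightarrow> 'a \<Rightarrow> bool) \<Rightarrow> bool" where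
  "compatible_preorder R \<longleftrightarrow> (\<forall>u v. le u v \<longrightarrow> R u v) \<and> (\<forall>u v w. R u v \<longrightarrow> R v w \<longrightarrow> R u w) \<and>
     (\<forall>u v w. R u v \<longrightarrow> R u w \<longrightarrow> R u (meet v w)) \<and> (\<forall>u v w. R u w \<longrightarrow> R v w \<longrightarrow> R (join u v) w)"

lemma prime_filter_iff:
  "P \<in> X \<longleftrightarrow> is_filter P \<and> zero \<notin> P \<and> (\<forall>a b. join a b \<in> P \<longrightarrow> a \<in> P \<or> b \<in> P)"
  unfolding Xp_def prime_filter_def is_filter_def by blast

lemma prime_filter_one: "P \<in> X \<Longrightarrow> one \<in> P"
  and prime_filter_zero: "P \<in> X \<Longrightarrow> zero \<notin> P"
  and prime_filter_up: "P \<in> X \<Longrightarrow> a \<in> P \<Longrightarrow> le a b \<Longrightarrow> b \<in> P"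
  unfolding Xp_def prime_filter_def by blast+

lemma prime_filter_meet: "P \<in> X \<Longrightarrow> meet a b \<in> P \<longleftrightarrow> a \<in> P \<and> b \<in> P"
  unfolding Xp_def prime_filter_def by (blast intro: L.inf_le1 L.inf_le2)

lemma prime_filter_join: "P \<in> X \<Longrightarrow> join a b \<in> P \<longleftrightarrow> a \<in> P \<or> b \<in> P"
  unfolding Xp_def prime_filter_def by (blast intro: L.sup_ge1 L.sup_ge2)

lemma Union_chain_closed_filters:
  assumes "C \<in> chains {Q. is_filter Q \<and> rel_closed R Q}" "C \<noteq> {}"
  shows "is_filter (\<Union>C)" "rel_closed R (\<Union>C)"
proof -
  have C: "\<And>Q. Q \<in> C \<Longrightarrow> is_filter Q \<and> rel_closed R Q" using assms(1) chainsD2 by blast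
  have "meet a b \<in> \<Union>C" if ab: "a \<in> \<Union>C" "b \<in> \<Union>C" for a b
  proof -
    obtain Q Q' where "Q \<in> C" "Q' \<in> C" "a \<in> Q" "b \<in> Q'" using ab by blast
    moreover from this have "Q \<subseteq> Q' \<or> Q' \<subseteq> Q" using assms(1) chainsD by blast
    ultimately show ?thesis using C unfolding is_filter_def by blast
  qed
  moreover have "one \<in> \<Union>C" using assms(2) C unfolding is_filter_def by blast
  moreover have "b \<in> \<Union>C" if "a \<in> \<Union>C" "le a b" for a b
    using that C unfolding is_filter_def by blast
  ultimately show "is_filter (\<Union>C)" unfolding is_filter_def by blast
  show "rel_closed R (\<Union>C)" using C unfolding rel_closed_def by blast
qed

lemma maximal_closed_filter:
  assumes "is_filter F" "rel_closed R F" "F \<inter> I = {}"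
  obtains Q where "is_filter Q" "rel_closed R Q" "F \<subseteq> Q" "Q \<inter> I = {}"
    "\<And>Q'. is_filter Q' \<Longrightarrow> rel_closed R Q' \<Longrightarrow> Q \<subseteq> Q' \<Longrightarrow> Q' \<inter> I = {} \<Longrightarrow> Q' = Q"
proof -
  define \<F> where "\<F> = {Q. is_filter Q \<and> rel_closed R Q \<and> F \<subseteq> Q \<and> Q \<inter> I = {}}"
  have "\<exists>U\<in>\<F>. \<forall>Q\<in>C. Q \<subseteq> U" if C: "C \<in> chains \<F>" for C
  proof (cases "C = {}")
    case True
    then show ?thesis using assms unfolding \<F>_def by blast
  next
    case False
    have "C \<in> chains {Q. is_filter Q \<and> rel_closed R Q}"
      using C unfolding chains_def \<F>_def by blast
    then have "is_filter (\<Union>C)" "rel_closed R (\<Union>C)"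
      using Union_chain_closed_filters False by blast+
    moreover have "F \<subseteq> \<Union>C" "\<Union>C \<inter> I = {}" using False C chainsD2 unfolding \<F>_def by blast+
    ultimately have "\<Union>C \<in> \<F>" unfolding \<F>_def by blast
    then show ?thesis by blast
  qed
  then obtain Q where Q: "Q \<in> \<F>" and max: "\<forall>Q'\<in>\<F>. Q \<subseteq> Q' \<longrightarrow> Q' = Q"
    using Zorn_Lemma2[of \<F>] by auto
  then have "is_filter Q" "rel_closed R Q" "F \<subseteq> Q" "Q \<inter> I = {}"
    unfolding \<F>_def by blast+
  moreover have "Q' = Q" if "is_filter Q'" "rel_closed R Q'" "Q \<subseteq> Q'" "Q' \<inter> I = {}" for Q'
    using max that \<open>F \<subseteq> Q\<close> unfolding \<F>_def by blast
  ultimately show thesis by (rule that)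
qed

context
  fixes R assumes R: "compatible_preorder R"
begin

lemma preorder_of_le: "le u v \<Longrightarrow> R u v"
  and preorder_trans: "R u v \<Longrightarrow> R v w \<Longrightarrow> R u w"
  and preorder_meet: "R u v \<Longrightarrow> R u w \<Longrightarrow> R u (meet v w)"
  and preorder_join: "R u w \<Longrightarrow> R v w \<Longrightarrow> R (join u v) w"
  using R unfolding compatible_preorder_def by blast+

lemma preorder_mono: "le u' u \<Longrightarrow> R u v \<Longrightarrow> le v v' \<Longrightarrow> R u' v'"
  by (meson preorder_of_le preorder_trans)

lemma closed_filter_adjoin:
  fixes w :: 'a
  assumes Q: "is_filter Q" "rel_closed R Q"
  defines "Qw \<equiv> {v. \<exists>q\<in>Q. R (meet q w) v}"
  shows "is_filter Qw" "rel_closed R Qw" "Q \<subseteq> Qw" "w \<in> Qw"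
proof -
  have one: "one \<in> Q" and meet: "\<And>a b. a \<in> Q \<Longrightarrow> b \<in> Q \<Longrightarrow> meet a b \<in> Q"
    using Q unfolding is_filter_def by blast+
  show "Q \<subseteq> Qw" unfolding Qw_def using preorder_of_le[OF L.inf_le1] by blast
  show "w \<in> Qw" unfolding Qw_def using one preorder_of_le[OF L.inf_le2] by blast
  show "rel_closed R Qw" unfolding Qw_def rel_closed_def using preorder_trans by blast
  have "meet a b \<in> Qw" if ab: "a \<in> Qw" "b \<in> Qw" for a b
  proof -
    obtain qa qb where q: "qa \<in> Q" "R (meet qa w) a" "qb \<in> Q" "R (meet qb w) b"
      using ab unfolding Qw_def by blast
    have "le (meet (meet qa qb) w) (meet qa w)" "le (meet (meet qa qb) w) (meet qb w)"
      by (meson L.inf_mono L.inf_le1 L.inf_le2 L.order_refl)+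
    then have "R (meet (meet qa qb) w) (meet a b)"
      using q preorder_meet preorder_mono L.order_refl by metis
    then show ?thesis unfolding Qw_def using meet q by blast
  qed
  moreover have "b \<in> Qw" if "a \<in> Qw" "le a b" for a b
    using that preorder_mono[OF L.order_refl] unfolding Qw_def by blast
  moreover have "one \<in> Qw" using \<open>Q \<subseteq> Qw\<close> one by blast
  ultimately show "is_filter Qw" unfolding is_filter_def by blast
qed

theorem prime_filter_separation:
  assumes F: "is_filter F" "rel_closed R F" and I: "is_ideal I" and disj: "F \<inter> I = {}"
  shows "\<exists>P\<in>X. rel_closed R P \<and> F \<subseteq> P \<and> P \<inter> I = {}"
proof -
  obtain Q where Q: "is_filter Q" "rel_closed R Q" "F \<subseteq> Q" "Q \<inter> I = {}"
    and max: "\<And>Q'. is_filter Q' \<Longrightarrow> rel_closed R Q' \<Longrightarrow> Q \<subseteq> Q' \<Longrightarrow> Q' \<inter> I = {} \<Longrightarrow> Q' = Q"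
    using maximal_closed_filter[OF F disj] by blast
  have meet: "meet a b \<in> Q" if "a \<in> Q" "b \<in> Q" for a b
    using Q(1) that unfolding is_filter_def by blast
  \<comment> \<open>by maximality, adjoining any w \<notin> Q to Q yields a closed filter that meets I\<close>
  have escape: "\<exists>q\<in>Q. \<exists>e\<in>I. R (meet q w) e" if "w \<notin> Q" for w
    using closed_filter_adjoin[OF Q(1,2), of w] max that by blast
  have "join x y \<notin> Q" if xy: "x \<notin> Q" "y \<notin> Q" for x y
  proof
    assume join: "join x y \<in> Q"
    obtain qx ex qy ey where
      e: "qx \<in> Q" "ex \<in> I" "R (meet qx x) ex" "qy \<in> Q" "ey \<in> I" "R (meet qy y) ey"
      using escape xy by meson
    define q e where "q = meet qx qy" and "e = join ex ey"
    have "R (meet q x) e" "R (meet q y) e"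
      unfolding q_def e_def using e(3,6)
      by (meson preorder_mono L.inf_mono L.inf_le1 L.inf_le2 L.order_refl L.sup_ge1 L.sup_ge2)+
    then have "R (meet q (join x y)) e"
      using preorder_join by (simp add: L.inf_sup_distrib1)
    moreover have "meet q (join x y) \<in> Q" unfolding q_def using e join meet by blast
    moreover have "e \<in> I" unfolding e_def using e I unfolding is_ideal_def by blast
    ultimately show False using Q(2,4) unfolding rel_closed_def by blast
  qed
  moreover have "zero \<notin> Q" using Q(4) I unfolding is_ideal_def by blast
  ultimately have "Q \<in> X" using Q(1) unfolding prime_filter_iff by blast
  with Q show ?thesis by blast
qed

lemma exists_closed_prime_filter:
  assumes "\<not> R a b"
  shows "\<exists>P\<in>X. rel_closed R P \<and> a \<in> P \<and> b \<notin> P"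
proof -
  have "is_filter {v. R a v}"
    unfolding is_filter_def using preorder_of_le[OF le_one] preorder_mono[OF L.order_refl] preorder_meet
    by blast
  moreover have "rel_closed R {v. R a v}" unfolding rel_closed_def using preorder_trans by blast
  moreover have "is_ideal {v. le v b}"
    unfolding is_ideal_def using zero_le L.order_trans L.sup_least by blast
  moreover have "{v. R a v} \<inter> {v. le v b} = {}"
    using assms preorder_mono[OF L.order_refl] by blast
  ultimately obtain P where "P \<in> X" "rel_closed R P" "{v. R a v} \<subseteq> P" "P \<inter> {v. le v b} = {}"
    using prime_filter_separation by blast
  moreover have "R a a" using preorder_of_le[OF L.order_refl] .
  ultimately show ?thesis using L.order_refl by blast
qed

end

lemma imp_preorder:
  assumes P: "P \<in> X"
  shows "compatible_preorder (\<lambda>u v. imp u v \<in> P)"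
proof -
  have "imp u w \<in> P" if "imp u v \<in> P" "imp v w \<in> P" for u v w
    using that prime_filter_up[OF P _ imp_trans] prime_filter_meet[OF P] by blast
  then show ?thesis
    unfolding compatible_preorder_def using imp_eq_one_if_le prime_filter_one[OF P]
    by (simp add: prime_filter_meet[OF P] imp_meet imp_join)
qed

lemma coimp_preorder:
  assumes P: "P \<in> X"
  shows "compatible_preorder (\<lambda>u v. coimp u v \<notin> P)"
proof -
  have "coimp u w \<notin> P" if "coimp u v \<notin> P" "coimp v w \<notin> P" for u v w
    using that prime_filter_up[OF P _ coimp_trans] prime_filter_join[OF P] by blast
  then show ?thesis
    unfolding compatible_preorder_def using coimp_eq_zero_if_le prime_filter_zero[OF P]
    by (simp add: prime_filter_join[OF P] coimp_meet coimp_join)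
qed

lemma RA_iff:
  "(P, Q) \<in> RA A \<longleftrightarrow> P \<in> X \<and> Q \<in> X \<and> rel_closed (\<lambda>u v. imp u v \<in> P) Q"
  unfolding RA_def rel_closed_def by blast

lemma SA_iff:
  "(P, Q) \<in> SA A \<longleftrightarrow> P \<in> X \<and> Q \<in> X \<and> rel_closed (\<lambda>u v. coimp u v \<notin> P) Q"
  unfolding SA_def rel_closed_def by blast

lemma RA_witness:
  assumes "P \<in> X" "imp a b \<notin> P"
  shows "\<exists>Q. (P, Q) \<in> RA A \<and> a \<in> Q \<and> b \<notin> Q"
  using exists_closed_prime_filter[OF imp_preorder] assms unfolding RA_iff by blast

lemma SA_witness:
  assumes "P \<in> X" "coimp a b \<in> P"
  shows "\<exists>Q. (P, Q) \<in> SA A \<and> a \<in> Q \<and> b \<notin> Q"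
  using exists_closed_prime_filter[OF coimp_preorder] assms unfolding SA_iff by blast

lemma mem_sigma: "P \<in> \<sigma> a \<longleftrightarrow> P \<in> X \<and> a \<in> P"
  unfolding sigmaA_def by blast

lemma sigma_subset: "\<sigma> a \<subseteq> X"
  unfolding sigmaA_def by blast

lemma sigma_meet: "\<sigma> (meet a b) = \<sigma> a \<inter> \<sigma> b"
  and sigma_join: "\<sigma> (join a b) = \<sigma> a \<union> \<sigma> b"
  and sigma_one: "\<sigma> one = X"
  and sigma_zero: "\<sigma> zero = {}"
  unfolding sigmaA_def
  using prime_filter_meet prime_filter_join prime_filter_one prime_filter_zero by blast+

lemma RA_image_subset: "RA A `` X \<subseteq> X"
  and SA_image_subset: "SA A `` X \<subseteq> X"
  unfolding RA_def SA_def by blast+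

lemma sigma_imp: "\<sigma> (imp a b) = rel_box X (RA A) ((X - \<sigma> a) \<union> \<sigma> b)"
proof (intro set_eqI iffI)
  fix P assume "P \<in> \<sigma> (imp a b)"
  then have "P \<in> X" "imp a b \<in> P" by (simp_all add: mem_sigma)
  moreover have "Q \<in> (X - \<sigma> a) \<union> \<sigma> b" if "(P, Q) \<in> RA A" for Q
    using that \<open>imp a b \<in> P\<close> by (auto simp: RA_iff rel_closed_def mem_sigma)
  ultimately show "P \<in> rel_box X (RA A) ((X - \<sigma> a) \<union> \<sigma> b)" unfolding rel_box_def by blast
next
  fix P assume P: "P \<in> rel_box X (RA A) ((X - \<sigma> a) \<union> \<sigma> b)"
  then have "P \<in> X" unfolding rel_box_def by blast
  moreover have "imp a b \<in> P"
  proof (rule ccontr)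
    assume "imp a b \<notin> P"
    then obtain Q where "(P, Q) \<in> RA A" "a \<in> Q" "b \<notin> Q" using RA_witness \<open>P \<in> X\<close> by blast
    then show False using P by (auto simp: rel_box_def mem_sigma)
  qed
  ultimately show "P \<in> \<sigma> (imp a b)" by (simp add: mem_sigma)
qed

lemma sigma_coimp: "\<sigma> (coimp a b) = X - rel_box X (SA A) ((X - \<sigma> a) \<union> \<sigma> b)"
proof (intro set_eqI iffI)
  fix P assume "P \<in> \<sigma> (coimp a b)"
  then have "P \<in> X" "coimp a b \<in> P" by (simp_all add: mem_sigma)
  then obtain Q where "(P, Q) \<in> SA A" "a \<in> Q" "b \<notin> Q" using SA_witness by blast
  then show "P \<in> X - rel_box X (SA A) ((X - \<sigma> a) \<union> \<sigma> b)"
    using \<open>P \<in> X\<close> by (auto simp: rel_box_def mem_sigma SA_iff)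
next
  fix P assume "P \<in> X - rel_box X (SA A) ((X - \<sigma> a) \<union> \<sigma> b)"
  then obtain Q where "(P, Q) \<in> SA A" "Q \<notin> (X - \<sigma> a) \<union> \<sigma> b" unfolding rel_box_def by blast
  moreover from this have "a \<in> Q" "b \<notin> Q" by (auto simp: SA_iff mem_sigma)
  ultimately show "P \<in> \<sigma> (coimp a b)" unfolding SA_def mem_sigma by blast
qed

section \<open>Compactness of the dual space\<close>

abbreviation subbase where "subbase \<equiv> range \<sigma> \<union> (\<lambda>a. X - \<sigma> a) ` UNIV"

lemma Union_subbase: "\<Union>subbase = X"
  using sigma_subset sigma_zero by blast

lemma topspace_tau: "topspace \<tau> = X"
  unfolding tauA_def topology_generated_by_topspace by (rule Union_subbase)

lemma openin_sigma: "openin \<tau> (\<sigma> a)"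
  and openin_compl_sigma: "openin \<tau> (X - \<sigma> a)"
  unfolding tauA_def by (blast intro: topology_generated_by_Basis)+

lemma closedin_sigma: "closedin \<tau> (\<sigma> a)"
  and closedin_compl_sigma: "closedin \<tau> (X - \<sigma> a)"
  using openin_sigma openin_compl_sigma sigma_subset
  unfolding closedin_def topspace_tau by (simp_all add: double_diff)

lemma basic_neighbourhood:
  assumes "openin \<tau> U" "P \<in> U"
  shows "\<exists>c d. P \<in> \<sigma> c - \<sigma> d \<and> \<sigma> c - \<sigma> d \<subseteq> U"
proof -
  have "generate_topology_on subbase U"
    using assms(1) unfolding tauA_def by (rule openin_topology_generated_by)
  then show ?thesis using assms(2)
  proof (induction arbitrary: P)
    case Empty
    then show ?case by simp
  next
    case (Int U V)
    obtain c d where "P \<in> \<sigma> c - \<sigma> d" "\<sigma> c - \<sigma> d \<subseteq> U" using Int.IH(1) Int.prems by blast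
    moreover obtain c' d' where "P \<in> \<sigma> c' - \<sigma> d'" "\<sigma> c' - \<sigma> d' \<subseteq> V" using Int.IH(2) Int.prems by blast
    ultimately have "P \<in> \<sigma> (meet c c') - \<sigma> (join d d')" "\<sigma> (meet c c') - \<sigma> (join d d') \<subseteq> U \<inter> V"
      unfolding sigma_meet sigma_join by blast+
    then show ?case by blast
  next
    case (UN K)
    then obtain k where "k \<in> K" "P \<in> k" by blast
    with UN.IH obtain c d where "P \<in> \<sigma> c - \<sigma> d" "\<sigma> c - \<sigma> d \<subseteq> k" by blast
    with \<open>k \<in> K\<close> show ?case by blast
  next
    case (Basis S)
    then consider a where "S = \<sigma> a" | a where "S = X - \<sigma> a" by blast
    then show ?case
    proof cases
      case 1
      then have "P \<in> \<sigma> a - \<sigma> zero" "\<sigma> a - \<sigma> zero \<subseteq> S" using Basis.prems by (simp_all add: sigma_zero)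
      then show ?thesis by blast
    next
      case 2
      then have "P \<in> \<sigma> one - \<sigma> a" "\<sigma> one - \<sigma> a \<subseteq> S" using Basis.prems by (simp_all add: sigma_one)
      then show ?thesis by blast
    qed
  qed
qed

lemma tau_subbase:
  "topology (arbitrary union_of (finite intersection_of (\<lambda>S. S \<in> subbase) relative_to \<Union>subbase)) = \<tau>"
proof (rule topology_base_unique)
  fix S assume "(finite intersection_of (\<lambda>S. S \<in> subbase) relative_to \<Union>subbase) S"
  then obtain \<F> where \<F>: "finite \<F>" "\<F> \<subseteq> subbase" "S = X \<inter> \<Inter>\<F>"
    unfolding relative_to_def intersection_of_def Union_subbase by blast
  have "openin \<tau> T" if "T \<in> \<F>" for T using \<F>(2) that openin_sigma openin_compl_sigma by blast
  then show "openin \<tau> S"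
    unfolding \<F>(3) using openin_Int_Inter[OF \<F>(1) openin_topspace[of \<tau>, unfolded topspace_tau]] by blast
next
  fix U P assume "openin \<tau> U" "P \<in> U"
  then obtain c d where cd: "P \<in> \<sigma> c - \<sigma> d" "\<sigma> c - \<sigma> d \<subseteq> U"
    using basic_neighbourhood by blast
  have "(finite intersection_of (\<lambda>S. S \<in> subbase) relative_to \<Union>subbase) (X \<inter> \<Inter>{\<sigma> c, X - \<sigma> d})"
    unfolding relative_to_def intersection_of_def Union_subbase
    by (intro exI[of _ "\<Inter>{\<sigma> c, X - \<sigma> d}"] conjI exI[of _ "{\<sigma> c, X - \<sigma> d}"]) auto
  moreover have "X \<inter> \<Inter>{\<sigma> c, X - \<sigma> d} = \<sigma> c - \<sigma> d" using sigma_subset by blast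
  ultimately show "\<exists>B. (finite intersection_of (\<lambda>S. S \<in> subbase) relative_to \<Union>subbase) B \<and> P \<in> B \<and> B \<subseteq> U"
    using cd by auto
qed

lemma foldr_meet_append: "foldr meet (xs @ ys) one = meet (foldr meet xs one) (foldr meet ys one)"
  by (induction xs) (simp_all add: one_meet meet_assoc)

lemma foldr_join_append: "foldr join (xs @ ys) zero = join (foldr join xs zero) (foldr join ys zero)"
  by (induction xs) (simp_all add: join_assoc L.sup_absorb2[OF zero_le])

lemma prime_filter_foldr_meet: "P \<in> X \<Longrightarrow> foldr meet xs one \<in> P \<longleftrightarrow> (\<forall>x\<in>set xs. x \<in> P)"
  by (induction xs) (simp_all add: prime_filter_meet prime_filter_one)

lemma prime_filter_foldr_join: "P \<in> X \<Longrightarrow> foldr join xs zero \<in> P \<longleftrightarrow> (\<exists>x\<in>set xs. x \<in> P)"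
  by (induction xs) (simp_all add: prime_filter_join prime_filter_zero)

definition generated_filter :: "'a set \<Rightarrow> 'a set" where
  "generated_filter J = {x. \<exists>bs. set bs \<subseteq> J \<and> le (foldr meet bs one) x}"

definition generated_ideal :: "'a set \<Rightarrow> 'a set" where
  "generated_ideal I = {y. \<exists>as. set as \<subseteq> I \<and> le y (foldr join as zero)}"

lemma is_filter_generated_filter: "is_filter (generated_filter J)"
proof -
  have "meet x y \<in> generated_filter J" if xy: "x \<in> generated_filter J" "y \<in> generated_filter J" for x y
  proof -
    obtain bs bs' where "set bs \<subseteq> J" "le (foldr meet bs one) x" "set bs' \<subseteq> J" "le (foldr meet bs' one) y"
      using xy unfolding generated_filter_def by blast
    then have "set (bs @ bs') \<subseteq> J" "le (foldr meet (bs @ bs') one) (meet x y)"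
      unfolding foldr_meet_append by (auto intro: L.le_infI1 L.le_infI2)
    then show ?thesis unfolding generated_filter_def by blast
  qed
  moreover have "one \<in> generated_filter J"
    unfolding generated_filter_def by (rule CollectI, rule exI[of _ "[]"]) simp
  ultimately show ?thesis unfolding is_filter_def generated_filter_def by (blast intro: L.order_trans)
qed

lemma is_ideal_generated_ideal: "is_ideal (generated_ideal I)"
proof -
  have "join x y \<in> generated_ideal I" if xy: "x \<in> generated_ideal I" "y \<in> generated_ideal I" for x y
  proof -
    obtain as as' where "set as \<subseteq> I" "le x (foldr join as zero)" "set as' \<subseteq> I" "le y (foldr join as' zero)"
      using xy unfolding generated_ideal_def by blast
    then have "set (as @ as') \<subseteq> I" "le (join x y) (foldr join (as @ as') zero)"
      unfolding foldr_join_append by (auto intro: L.le_supI1 L.le_supI2)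
    then show ?thesis unfolding generated_ideal_def by blast
  qed
  moreover have "zero \<in> generated_ideal I"
    unfolding generated_ideal_def by (rule CollectI, rule exI[of _ "[]"]) simp
  ultimately show ?thesis unfolding is_ideal_def generated_ideal_def by (blast intro: L.order_trans)
qed

lemma generated_filter_base: "b \<in> J \<Longrightarrow> b \<in> generated_filter J"
  unfolding generated_filter_def by (intro CollectI exI[of _ "[b]"]) (simp add: meet_comm[of b] one_meet)

lemma generated_ideal_base: "a \<in> I \<Longrightarrow> a \<in> generated_ideal I"
  unfolding generated_ideal_def by (intro CollectI exI[of _ "[a]"]) (simp add: L.sup_absorb1[OF zero_le])

lemma le_preorder: "compatible_preorder le"
  unfolding compatible_preorder_def by (blast intro: L.order_trans L.le_infI L.le_supI)

lemma rel_closed_le_if_filter: "is_filter F \<Longrightarrow> rel_closed le F"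
  unfolding is_filter_def rel_closed_def by blast

(* If the filter generated by J and the ideal generated by I were disjoint, a prime filter
   separating them would lie in no member of C. *)
lemma subbase_finite_subcover:
  assumes C: "C \<subseteq> subbase" and cover: "X \<subseteq> \<Union>C"
  shows "\<exists>C'. finite C' \<and> C' \<subseteq> C \<and> X \<subseteq> \<Union>C'"
proof -
  define I where "I = {a. \<sigma> a \<in> C}"
  define J where "J = {b. X - \<sigma> b \<in> C}"
  have "generated_filter J \<inter> generated_ideal I \<noteq> {}"
  proof
    assume "generated_filter J \<inter> generated_ideal I = {}"
    then obtain P where P: "P \<in> X" "generated_filter J \<subseteq> P" "P \<inter> generated_ideal I = {}"
      using prime_filter_separation[OF le_preorder is_filter_generated_filter
          rel_closed_le_if_filter[OF is_filter_generated_filter] is_ideal_generated_ideal] by blast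
    obtain S where S: "S \<in> C" "P \<in> S" using cover P(1) by blast
    then consider a where "S = \<sigma> a" | b where "S = X - \<sigma> b" using C by blast
    then consider a where "a \<in> I" "a \<in> P" | b where "b \<in> J" "b \<notin> P"
      using S unfolding I_def J_def by (metis Diff_iff mem_Collect_eq mem_sigma)
    then show False using P generated_filter_base generated_ideal_base by cases blast+
  qed
  then obtain x bs as where bs: "set bs \<subseteq> J" "le (foldr meet bs one) x"
    and as: "set as \<subseteq> I" "le x (foldr join as zero)"
    unfolding generated_filter_def generated_ideal_def by blast
  then have le: "le (foldr meet bs one) (foldr join as zero)" by (blast intro: L.order_trans)
  define C' where "C' = \<sigma> ` set as \<union> (\<lambda>b. X - \<sigma> b) ` set bs"
  have "X \<subseteq> \<Union>C'"
  proof
    fix P assume P: "P \<in> X"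
    show "P \<in> \<Union>C'"
    proof (cases "\<forall>b\<in>set bs. b \<in> P")
      case True
      then have "foldr join as zero \<in> P"
        using le prime_filter_up[OF P] prime_filter_foldr_meet[OF P] by blast
      then obtain a where "a \<in> set as" "a \<in> P" using prime_filter_foldr_join[OF P] by blast
      then show ?thesis using P unfolding C'_def by (auto simp: mem_sigma)
    next
      case False
      then show ?thesis using P unfolding C'_def by (auto simp: mem_sigma)
    qed
  qed
  moreover have "C' \<subseteq> C" using as(1) bs(1) unfolding C'_def I_def J_def by auto
  moreover have "finite C'" unfolding C'_def by simp
  ultimately show ?thesis by blast
qed

lemma compact_space_tau: "compact_space \<tau>"
proof (rule Alexander_subbase[OF tau_subbase])
  fix C assume "C \<subseteq> subbase" "\<Union>C = topspace \<tau>"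
  then obtain C' where "finite C'" "C' \<subseteq> C" "X \<subseteq> \<Union>C'"
    using subbase_finite_subcover topspace_tau by (metis order_refl)
  moreover have "\<Union>C' \<subseteq> X" using \<open>C' \<subseteq> C\<close> \<open>\<Union>C = topspace \<tau>\<close> topspace_tau by blast
  ultimately show "\<exists>C'. finite C' \<and> C' \<subseteq> C \<and> \<Union>C' = topspace \<tau>"
    unfolding topspace_tau by blast
qed

lemma clopens_iff: "U \<in> clopens \<longleftrightarrow> openin \<tau> U \<and> closedin \<tau> U"
  by (simp add: TA_def)

lemma TA_simps:
  "tmeet (TA A) = (\<inter>)" "tjoin (TA A) = (\<union>)" "tneg (TA A) = (\<lambda>U. X - U)"
  "tG (TA A) = rel_box X (RA A)" "tH (TA A) = rel_box X (SA A)"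
  by (simp_all add: TA_def rel_box_def fun_eq_iff)

lemma clopen_subset: "U \<in> clopens \<Longrightarrow> U \<subseteq> X"
  unfolding clopens_iff using openin_subset topspace_tau by metis

lemma sigma_clopen: "\<sigma> a \<in> clopens"
  and compl_sigma_clopen: "X - \<sigma> a \<in> clopens"
  unfolding clopens_iff using openin_sigma closedin_sigma openin_compl_sigma closedin_compl_sigma by blast+

lemma clopens_Int: "U \<in> clopens \<Longrightarrow> V \<in> clopens \<Longrightarrow> U \<inter> V \<in> clopens"
  and clopens_Un: "U \<in> clopens \<Longrightarrow> V \<in> clopens \<Longrightarrow> U \<union> V \<in> clopens"
  and clopens_compl: "U \<in> clopens \<Longrightarrow> X - U \<in> clopens"
  and top_clopen: "X \<in> clopens"
  unfolding clopens_iff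
  by (auto simp flip: topspace_tau intro: openin_diff closedin_diff)

lemma clopens_Int_Inter: "finite \<F> \<Longrightarrow> \<F> \<subseteq> clopens \<Longrightarrow> X \<inter> \<Inter>\<F> \<in> clopens"
  by (induction \<F> rule: finite_induct) (auto simp: top_clopen Int_left_commute intro: clopens_Int)

lemma openin_basic: "openin \<tau> (\<sigma> c - \<sigma> d)"
proof -
  have "\<sigma> c - \<sigma> d = \<sigma> c \<inter> (X - \<sigma> d)" using sigma_subset by blast
  then show ?thesis using openin_Int[OF openin_sigma openin_compl_sigma] by simp
qed

lemma compl_clopen_finite_subcover:
  assumes U: "U \<in> clopens" and \<U>: "\<forall>W\<in>\<U>. \<exists>c d. W = \<sigma> c - \<sigma> d" and cover: "X - U \<subseteq> \<Union>\<U>"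
  obtains \<V> where "finite \<V>" "\<V> \<subseteq> \<U>" "X - U \<subseteq> \<Union>\<V>"
proof -
  have "closedin \<tau> (X - U)" using clopens_compl[OF U] unfolding clopens_iff by blast
  then have compact: "compactin \<tau> (X - U)" by (rule closedin_compact_space[OF compact_space_tau])
  have "openin \<tau> W" if W: "W \<in> \<U>" for W
  proof -
    obtain c d where "W = \<sigma> c - \<sigma> d" using \<U> W by blast
    then show ?thesis using openin_basic by simp
  qed
  then have "\<exists>\<V>. finite \<V> \<and> \<V> \<subseteq> \<U> \<and> X - U \<subseteq> \<Union>\<V>"
    by (rule compactinD[OF compact _ cover])
  then show thesis using that by blast
qed

lemma clopen_as_Inter:
  assumes U: "U \<in> clopens"
  obtains \<F> where "finite \<F>" "\<forall>W\<in>\<F>. \<exists>c d. W = (X - \<sigma> c) \<union> \<sigma> d" "U = X \<inter> \<Inter>\<F>"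
proof -
  define \<U> where "\<U> = {\<sigma> c - \<sigma> d | c d. \<sigma> c - \<sigma> d \<subseteq> X - U}"
  have cover: "X - U \<subseteq> \<Union>\<U>"
  proof
    fix P assume "P \<in> X - U"
    moreover have "openin \<tau> (X - U)" using clopens_compl[OF U] clopens_iff by blast
    ultimately obtain c d where "P \<in> \<sigma> c - \<sigma> d" "\<sigma> c - \<sigma> d \<subseteq> X - U"
      using basic_neighbourhood by blast
    then show "P \<in> \<Union>\<U>" unfolding \<U>_def by blast
  qed
  have basic: "\<forall>W\<in>\<U>. \<exists>c d. W = \<sigma> c - \<sigma> d" unfolding \<U>_def by auto
  obtain \<V> where \<V>: "finite \<V>" "\<V> \<subseteq> \<U>" "X - U \<subseteq> \<Union>\<V>"
    by (rule compl_clopen_finite_subcover[OF U basic cover])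
  show thesis
  proof
    show "finite ((\<lambda>W. X - W) ` \<V>)" using \<V>(1) by simp
    show "\<forall>T\<in>(\<lambda>W. X - W) ` \<V>. \<exists>c d. T = (X - \<sigma> c) \<union> \<sigma> d"
    proof
      fix T assume "T \<in> (\<lambda>W. X - W) ` \<V>"
      then obtain c d where "T = X - (\<sigma> c - \<sigma> d)" using \<V>(2) unfolding \<U>_def by blast
      then have "T = (X - \<sigma> c) \<union> \<sigma> d" using sigma_subset by blast
      then show "\<exists>c d. T = (X - \<sigma> c) \<union> \<sigma> d" by auto
    qed
    have "W \<subseteq> X - U" if "W \<in> \<V>" for W using \<V>(2) that unfolding \<U>_def by blast
    then have "\<Union>\<V> = X - U" using \<V>(3) by blast
    moreover have "X \<inter> \<Inter>((\<lambda>W. X - W) ` \<V>) = X - \<Union>\<V>" by blast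
    ultimately show "U = X \<inter> \<Inter>((\<lambda>W. X - W) ` \<V>)" using clopen_subset[OF U] by blast
  qed
qed

lemma rel_box_clopen:
  assumes "R `` X \<subseteq> X" and basic: "\<And>c d. rel_box X R ((X - \<sigma> c) \<union> \<sigma> d) \<in> clopens"
    and "U \<in> clopens"
  shows "rel_box X R U \<in> clopens"
proof -
  obtain \<F> where \<F>: "finite \<F>" "\<forall>W\<in>\<F>. \<exists>c d. W = (X - \<sigma> c) \<union> \<sigma> d" "U = X \<inter> \<Inter>\<F>"
    using clopen_as_Inter[OF assms(3)] by blast
  have "rel_box X R ` \<F> \<subseteq> clopens"
  proof
    fix T assume "T \<in> rel_box X R ` \<F>"
    then obtain W where "W \<in> \<F>" "T = rel_box X R W" by blast
    moreover obtain c d where "W = (X - \<sigma> c) \<union> \<sigma> d" using \<F>(2) \<open>W \<in> \<F>\<close> by blast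
    ultimately show "T \<in> clopens" using basic[of c d] by (simp only:)
  qed
  then show ?thesis
    unfolding \<F>(3) rel_box_Inter[OF assms(1)] by (rule clopens_Int_Inter[OF finite_imageI[OF \<F>(1)]])
qed

lemma G_clopen: "U \<in> clopens \<Longrightarrow> rel_box X (RA A) U \<in> clopens"
  by (rule rel_box_clopen[OF RA_image_subset]) (simp add: sigma_clopen flip: sigma_imp)

lemma H_clopen: "U \<in> clopens \<Longrightarrow> rel_box X (SA A) U \<in> clopens"
proof (rule rel_box_clopen[OF SA_image_subset])
  fix c d
  have "rel_box X (SA A) ((X - \<sigma> c) \<union> \<sigma> d) = X - \<sigma> (coimp c d)"
    unfolding sigma_coimp by (auto simp: rel_box_def)
  then show "rel_box X (SA A) ((X - \<sigma> c) \<union> \<sigma> d) \<in> clopens" by (simp add: compl_sigma_clopen)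
qed

section \<open>The correspondence of congruences\<close>

lemma congruence_preorder:
  assumes \<theta>: "\<theta> \<in> Con_WHB A"
  shows "compatible_preorder (\<lambda>u v. (u, meet u v) \<in> \<theta>)"
proof -
  note refl = Con_WHB_refl[OF \<theta>] and sym = Con_WHB_sym[OF \<theta>] and trans = Con_WHB_trans[OF \<theta>]
    and cong_meet = Con_WHB_meet[OF \<theta>] and cong_join = Con_WHB_join[OF \<theta>]
  have "(u, meet u v) \<in> \<theta>" if "le u v" for u v
    using that refl unfolding wle_def by simp
  moreover have "(u, meet u w) \<in> \<theta>" if uv: "(u, meet u v) \<in> \<theta>" and vw: "(v, meet v w) \<in> \<theta>" for u v w
  proof -
    have "(meet u v, meet u (meet v w)) \<in> \<theta>" using cong_meet[OF refl vw] .
    then have u_uvw: "(u, meet u (meet v w)) \<in> \<theta>" using trans[OF uv] by blast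
    have "(meet u w, meet (meet u (meet v w)) w) \<in> \<theta>" using cong_meet[OF u_uvw refl] .
    then have "(meet u w, meet u (meet v w)) \<in> \<theta>" by (simp add: L.inf_assoc L.inf_left_commute)
    then show ?thesis using trans[OF u_uvw] sym by blast
  qed
  moreover have "(u, meet u (meet v w)) \<in> \<theta>" if "(u, meet u v) \<in> \<theta>" "(u, meet u w) \<in> \<theta>" for u v w
    using cong_meet[OF that] by (simp add: L.inf_assoc L.inf_left_commute)
  moreover have "(join u v, meet (join u v) w) \<in> \<theta>" if "(u, meet u w) \<in> \<theta>" "(v, meet v w) \<in> \<theta>" for u v w
    using cong_join[OF that] by (simp add: L.inf_sup_distrib2)
  ultimately show ?thesis unfolding compatible_preorder_def by blast
qed

definition closed_points :: "('a \<times> 'a) set \<Rightarrow> 'a set set" where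
  "closed_points \<theta> = {P \<in> X. \<forall>u v. u \<in> P \<longrightarrow> (u, v) \<in> \<theta> \<longrightarrow> v \<in> P}"

definition tba_con :: "('a \<times> 'a) set \<Rightarrow> ('a set set \<times> 'a set set) set" where
  "tba_con \<theta> = {(U, V). U \<in> clopens \<and> V \<in> clopens \<and> U \<inter> closed_points \<theta> = V \<inter> closed_points \<theta>}"

definition whb_con :: "('a set set \<times> 'a set set) set \<Rightarrow> ('a \<times> 'a) set" where
  "whb_con \<phi> = {(a, b). (\<sigma> a, \<sigma> b) \<in> \<phi>}"

lemma closed_points_subset: "closed_points \<theta> \<subseteq> X"
  unfolding closed_points_def by blast

lemma RA_closed_points:
  assumes \<theta>: "\<theta> \<in> Con_WHB A"
  shows "RA A `` closed_points \<theta> \<subseteq> closed_points \<theta>"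
proof clarify
  fix P Q assume P: "P \<in> closed_points \<theta>" and PQ: "(P, Q) \<in> RA A"
  have "v \<in> Q" if "u \<in> Q" "(u, v) \<in> \<theta>" for u v
  proof -
    have "(imp v v, imp u v) \<in> \<theta>"
      using Con_WHB_imp[OF \<theta> Con_WHB_sym[OF \<theta> that(2)] Con_WHB_refl[OF \<theta>]] .
    then have "imp u v \<in> P"
      using P prime_filter_one unfolding closed_points_def imp_self by blast
    then show "v \<in> Q" using PQ that(1) unfolding RA_def by blast
  qed
  then show "Q \<in> closed_points \<theta>" using PQ unfolding closed_points_def RA_def by blast
qed

lemma SA_closed_points:
  assumes \<theta>: "\<theta> \<in> Con_WHB A"
  shows "SA A `` closed_points \<theta> \<subseteq> closed_points \<theta>"
proof clarify
  fix P Q assume P: "P \<in> closed_points \<theta>" and PQ: "(P, Q) \<in> SA A"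
  have "v \<in> Q" if "u \<in> Q" "(u, v) \<in> \<theta>" for u v
  proof (rule ccontr)
    assume "v \<notin> Q"
    then have "coimp u v \<in> P" using PQ that(1) unfolding SA_def by blast
    moreover have "(coimp u v, coimp v v) \<in> \<theta>"
      using Con_WHB_coimp[OF \<theta> that(2) Con_WHB_refl[OF \<theta>]] .
    ultimately have "zero \<in> P" using P unfolding closed_points_def coimp_self by blast
    then show False using P prime_filter_zero unfolding closed_points_def by blast
  qed
  then show "Q \<in> closed_points \<theta>" using PQ unfolding closed_points_def SA_def by blast
qed

lemma separating_closed_point:
  assumes \<theta>: "\<theta> \<in> Con_WHB A" and "(a, meet a b) \<notin> \<theta>"
  shows "\<exists>P\<in>closed_points \<theta>. a \<in> P \<and> b \<notin> P"
proof -
  obtain P where P: "P \<in> X" "rel_closed (\<lambda>u v. (u, meet u v) \<in> \<theta>) P" "a \<in> P" "b \<notin> P"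
    using exists_closed_prime_filter[OF congruence_preorder[OF \<theta>]] assms(2) by blast
  have "v \<in> P" if "u \<in> P" "(u, v) \<in> \<theta>" for u v
  proof -
    have "(u, meet u v) \<in> \<theta>" using Con_WHB_meet[OF \<theta> Con_WHB_refl[OF \<theta>, of u] that(2)] by simp
    then show ?thesis using P(2) that(1) unfolding rel_closed_def by blast
  qed
  then show ?thesis using P unfolding closed_points_def by blast
qed

lemma tba_con_Con:
  assumes \<theta>: "\<theta> \<in> Con_WHB A"
  shows "tba_con \<theta> \<in> Con_TBA (TA A)"
proof -
  let ?Y = "closed_points \<theta>"
  have "equiv clopens (tba_con \<theta>)"
    by (rule equivI) (auto simp: tba_con_def refl_on_def sym_def trans_def)
  moreover have "(U \<inter> U', V \<inter> V') \<in> tba_con \<theta>" "(U \<union> U', V \<union> V') \<in> tba_con \<theta>"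
    if "(U, V) \<in> tba_con \<theta>" "(U', V') \<in> tba_con \<theta>" for U V U' V'
    using that clopens_Int clopens_Un unfolding tba_con_def by auto
  moreover have "(X - U, X - V) \<in> tba_con \<theta>" "(rel_box X (RA A) U, rel_box X (RA A) V) \<in> tba_con \<theta>"
    "(rel_box X (SA A) U, rel_box X (SA A) V) \<in> tba_con \<theta>"
    if "(U, V) \<in> tba_con \<theta>" for U V
  proof -
    have UV: "U \<in> clopens" "V \<in> clopens" "U \<inter> ?Y = V \<inter> ?Y" using that unfolding tba_con_def by auto
    have "(X - U) \<inter> ?Y = ?Y - U \<inter> ?Y" "(X - V) \<inter> ?Y = ?Y - V \<inter> ?Y"
      using closed_points_subset by blast+
    then show "(X - U, X - V) \<in> tba_con \<theta>"
      using UV clopens_compl unfolding tba_con_def by simp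
    show "(rel_box X (RA A) U, rel_box X (RA A) V) \<in> tba_con \<theta>"
      using UV G_clopen rel_box_eq_on_invariant[OF RA_closed_points[OF \<theta>] UV(3)] unfolding tba_con_def by simp
    show "(rel_box X (SA A) U, rel_box X (SA A) V) \<in> tba_con \<theta>"
      using UV H_clopen rel_box_eq_on_invariant[OF SA_closed_points[OF \<theta>] UV(3)] unfolding tba_con_def by simp
  qed
  ultimately show ?thesis unfolding Con_TBA_def TA_simps by simp
qed

lemma whb_con_Con:
  assumes \<phi>: "\<phi> \<in> Con_TBA (TA A)"
  shows "whb_con \<phi> \<in> Con_WHB A"
proof -
  note cong = Con_TBA_meet[OF \<phi>] Con_TBA_join[OF \<phi>] Con_TBA_neg[OF \<phi>] Con_TBA_G[OF \<phi>] Con_TBA_H[OF \<phi>]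
  have "equiv UNIV (whb_con \<phi>)"
  proof (rule equivI)
    show "refl (whb_con \<phi>)"
      unfolding whb_con_def refl_on_def using Con_TBA_refl[OF \<phi> sigma_clopen] by simp
    show "sym (whb_con \<phi>)" unfolding whb_con_def by (rule symI) (simp add: Con_TBA_sym[OF \<phi>])
    show "trans (whb_con \<phi>)" unfolding whb_con_def by (rule transI) (use Con_TBA_trans[OF \<phi>] in simp)
  qed simp
  moreover have "(meet a c, meet b d) \<in> whb_con \<phi> \<and> (join a c, join b d) \<in> whb_con \<phi> \<and>
      (imp a c, imp b d) \<in> whb_con \<phi> \<and> (coimp a c, coimp b d) \<in> whb_con \<phi>"
    if "(a, b) \<in> whb_con \<phi>" "(c, d) \<in> whb_con \<phi>" for a b c d
  proof -
    have ab: "(\<sigma> a, \<sigma> b) \<in> \<phi>" and cd: "(\<sigma> c, \<sigma> d) \<in> \<phi>" using that unfolding whb_con_def by simp_all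
    have "((X - \<sigma> a) \<union> \<sigma> c, (X - \<sigma> b) \<union> \<sigma> d) \<in> \<phi>"
      using cong(2)[OF cong(3)[OF ab] cd] unfolding TA_simps .
    then show ?thesis
      using cong(1,2)[OF ab cd] cong(4) cong(3)[OF cong(5)] unfolding TA_simps
      by (simp add: whb_con_def sigma_meet sigma_join sigma_imp sigma_coimp)
  qed
  ultimately show ?thesis unfolding Con_WHB_def by blast
qed

lemma whb_con_tba_con:
  assumes \<theta>: "\<theta> \<in> Con_WHB A"
  shows "whb_con (tba_con \<theta>) = \<theta>"
proof (intro set_eqI, clarify)
  fix a b
  let ?Y = "closed_points \<theta>"
  have "\<sigma> a \<inter> ?Y = \<sigma> b \<inter> ?Y \<longleftrightarrow> (a, b) \<in> \<theta>"
  proof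
    assume "(a, b) \<in> \<theta>"
    then have "a \<in> P \<longleftrightarrow> b \<in> P" if "P \<in> ?Y" for P
      using that Con_WHB_sym[OF \<theta>] unfolding closed_points_def by blast
    then show "\<sigma> a \<inter> ?Y = \<sigma> b \<inter> ?Y" by (auto simp: mem_sigma)
  next
    assume eq: "\<sigma> a \<inter> ?Y = \<sigma> b \<inter> ?Y"
    have no_separation: "(x, meet x y) \<in> \<theta>" if "x = a \<and> y = b \<or> x = b \<and> y = a" for x y
    proof (rule ccontr)
      assume "(x, meet x y) \<notin> \<theta>"
      then obtain P where "P \<in> ?Y" "x \<in> P" "y \<notin> P" using separating_closed_point[OF \<theta>] by blast
      then have "P \<in> \<sigma> x \<inter> ?Y" "P \<notin> \<sigma> y \<inter> ?Y" using closed_points_subset by (auto simp: mem_sigma)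
      then show False using eq that by blast
    qed
    have "(a, meet a b) \<in> \<theta>" "(meet a b, b) \<in> \<theta>"
      using no_separation[of a b] no_separation[of b a] Con_WHB_sym[OF \<theta>] by (simp_all add: meet_comm)
    then show "(a, b) \<in> \<theta>" using Con_WHB_trans[OF \<theta>] by blast
  qed
  then show "(a, b) \<in> whb_con (tba_con \<theta>) \<longleftrightarrow> (a, b) \<in> \<theta>"
    unfolding whb_con_def tba_con_def by (simp add: sigma_clopen)
qed

context
  fixes \<phi> assumes \<phi>: "\<phi> \<in> Con_TBA (TA A)"
begin

lemmas con_clopen = Con_TBA_carrier[OF \<phi>]
  and con_refl = Con_TBA_refl[OF \<phi>]
  and con_sym = Con_TBA_sym[OF \<phi>]
  and con_trans = Con_TBA_trans[OF \<phi>]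
  and con_Int = Con_TBA_meet[OF \<phi>, unfolded TA_simps]
  and con_Un = Con_TBA_join[OF \<phi>, unfolded TA_simps]
  and con_compl = Con_TBA_neg[OF \<phi>, unfolded TA_simps]

lemma con_iff_biimp_top:
  "(U, V) \<in> \<phi> \<longleftrightarrow> U \<in> clopens \<and> V \<in> clopens \<and> (((X - U) \<union> V) \<inter> ((X - V) \<union> U), X) \<in> \<phi>"
proof safe
  assume UV: "(U, V) \<in> \<phi>"
  then show U: "U \<in> clopens" and V: "V \<in> clopens" using con_clopen by blast+
  have "((X - U) \<union> V, (X - V) \<union> V) \<in> \<phi>" "((X - V) \<union> U, (X - U) \<union> U) \<in> \<phi>"
    using con_Un[OF con_compl[OF UV] con_refl[OF V]] con_Un[OF con_compl[OF con_sym[OF UV]] con_refl[OF U]] .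
  moreover have "(X - V) \<union> V = X" "(X - U) \<union> U = X" using clopen_subset U V by blast+
  ultimately show "(((X - U) \<union> V) \<inter> ((X - V) \<union> U), X) \<in> \<phi>" using con_Int by fastforce
next
  assume U: "U \<in> clopens" and V: "V \<in> clopens" and D: "(((X - U) \<union> V) \<inter> ((X - V) \<union> U), X) \<in> \<phi>"
  have "U \<inter> (((X - U) \<union> V) \<inter> ((X - V) \<union> U)) = U \<inter> V" "V \<inter> (((X - U) \<union> V) \<inter> ((X - V) \<union> U)) = U \<inter> V"
    "U \<inter> X = U" "V \<inter> X = V"
    using clopen_subset U V by blast+
  then have "(U \<inter> V, U) \<in> \<phi>" "(U \<inter> V, V) \<in> \<phi>"
    using con_Int[OF con_refl[OF U] D] con_Int[OF con_refl[OF V] D] by simp_all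
  then show "(U, V) \<in> \<phi>" using con_sym con_trans by blast
qed

lemma con_top_compl_Union:
  assumes "finite \<W>" "\<forall>W\<in>\<W>. (X - W, X) \<in> \<phi>"
  shows "(X - \<Union>\<W>, X) \<in> \<phi>"
  using assms
proof (induction \<W> rule: finite_induct)
  case empty
  then show ?case using con_refl[OF top_clopen] by simp
next
  case (insert W \<W>)
  then have "((X - W) \<inter> (X - \<Union>\<W>), X \<inter> X) \<in> \<phi>" by (intro con_Int) simp_all
  then show ?case by (simp add: Diff_Un)
qed

lemma closed_points_subset_if_top:
  assumes UX: "(U, X) \<in> \<phi>"
  shows "closed_points (whb_con \<phi>) \<subseteq> U"
proof
  fix P assume P: "P \<in> closed_points (whb_con \<phi>)"
  have U: "U \<in> clopens" using con_clopen[OF UX] by blast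
  show "P \<in> U"
  proof (rule ccontr)
    assume "P \<notin> U"
    then have "P \<in> X - U" using P closed_points_subset by blast
    moreover have "openin \<tau> (X - U)" using clopens_compl[OF U] clopens_iff by blast
    ultimately obtain c d where cd: "P \<in> \<sigma> c - \<sigma> d" "\<sigma> c - \<sigma> d \<subseteq> X - U"
      using basic_neighbourhood by blast
    define W where "W = (X - \<sigma> c) \<union> \<sigma> d"
    have W: "W \<in> clopens" unfolding W_def by (intro clopens_Un compl_sigma_clopen sigma_clopen)
    have "W \<union> U = W" "W \<union> X = X" using cd(2) sigma_subset clopen_subset[OF U] unfolding W_def by blast+
    then have "(W, X) \<in> \<phi>" using con_Un[OF con_refl[OF W] UX] by simp
    moreover have "\<sigma> c \<inter> W = \<sigma> (meet c d)" "\<sigma> c \<inter> X = \<sigma> c"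
      unfolding W_def sigma_meet using sigma_subset by blast+
    ultimately have "(\<sigma> c, \<sigma> (meet c d)) \<in> \<phi>" using con_sym con_Int[OF con_refl[OF sigma_clopen]] by metis
    then have "(c, meet c d) \<in> whb_con \<phi>" unfolding whb_con_def by simp
    moreover have "c \<in> P" "d \<notin> P" using cd(1) by (simp_all add: mem_sigma)
    ultimately have "meet c d \<in> P" using P unfolding closed_points_def by blast
    then show False using \<open>d \<notin> P\<close> P closed_points_subset prime_filter_meet by blast
  qed
qed

lemma top_if_closed_points_subset:
  assumes U: "U \<in> clopens" and YU: "closed_points (whb_con \<phi>) \<subseteq> U"
  shows "(U, X) \<in> \<phi>"
proof -
  define \<U> where "\<U> = {\<sigma> u - \<sigma> v | u v. (\<sigma> u, \<sigma> v) \<in> \<phi>}"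
  have cover: "X - U \<subseteq> \<Union>\<U>"
  proof
    fix Q assume "Q \<in> X - U"
    then have "Q \<in> X" "Q \<notin> closed_points (whb_con \<phi>)" using YU by blast+
    then obtain u v where "u \<in> Q" "(u, v) \<in> whb_con \<phi>" "v \<notin> Q"
      unfolding closed_points_def by blast
    then have "Q \<in> \<sigma> u - \<sigma> v" "(\<sigma> u, \<sigma> v) \<in> \<phi>"
      using \<open>Q \<in> X\<close> by (simp_all add: mem_sigma whb_con_def)
    then show "Q \<in> \<Union>\<U>" unfolding \<U>_def by blast
  qed
  have basic: "\<forall>W\<in>\<U>. \<exists>c d. W = \<sigma> c - \<sigma> d" unfolding \<U>_def by auto
  obtain \<V> where \<V>: "finite \<V>" "\<V> \<subseteq> \<U>" "X - U \<subseteq> \<Union>\<V>"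
    by (rule compl_clopen_finite_subcover[OF U basic cover])
  have "(X - W, X) \<in> \<phi>" if W: "W \<in> \<V>" for W
  proof -
    obtain u v where uv: "W = \<sigma> u - \<sigma> v" "(\<sigma> u, \<sigma> v) \<in> \<phi>" using W \<V>(2) unfolding \<U>_def by blast
    have "((X - \<sigma> u) \<union> \<sigma> v, (X - \<sigma> v) \<union> \<sigma> v) \<in> \<phi>"
      using con_Un[OF con_compl[OF uv(2)] con_refl[OF sigma_clopen]] .
    moreover have "(X - \<sigma> v) \<union> \<sigma> v = X" "X - W = (X - \<sigma> u) \<union> \<sigma> v"
      unfolding uv(1) using sigma_subset by blast+
    ultimately show ?thesis by simp
  qed
  then have "(U \<union> (X - \<Union>\<V>), U \<union> X) \<in> \<phi>"
    using con_Un[OF con_refl[OF U] con_top_compl_Union[OF \<V>(1)]] by blast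
  moreover have "U \<union> (X - \<Union>\<V>) = U" "U \<union> X = X" using \<V>(3) clopen_subset[OF U] by blast+
  ultimately show ?thesis by simp
qed

lemma tba_con_whb_con: "tba_con (whb_con \<phi>) = \<phi>"
proof (intro set_eqI, clarify)
  fix U V
  let ?Y = "closed_points (whb_con \<phi>)" and ?D = "((X - U) \<union> V) \<inter> ((X - V) \<union> U)"
  show "(U, V) \<in> tba_con (whb_con \<phi>) \<longleftrightarrow> (U, V) \<in> \<phi>"
  proof (cases "U \<in> clopens \<and> V \<in> clopens")
    case True
    then have "?D \<in> clopens" by (intro clopens_Int clopens_Un clopens_compl) simp_all
    then have "(?D, X) \<in> \<phi> \<longleftrightarrow> ?Y \<subseteq> ?D"
      using closed_points_subset_if_top top_if_closed_points_subset by blast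
    moreover have "?Y \<subseteq> ?D \<longleftrightarrow> U \<inter> ?Y = V \<inter> ?Y" using closed_points_subset by auto
    ultimately show ?thesis using True unfolding tba_con_def con_iff_biimp_top[of U V] by simp
  next
    case False
    then show ?thesis unfolding tba_con_def using con_clopen by auto
  qed
qed

end

lemma clopens_Con_TBA: "clopens \<times> clopens \<in> Con_TBA (TA A)"
  unfolding Con_TBA_def TA_simps
  by (auto simp: equiv_def refl_on_def sym_def trans_def
      intro: clopens_Int clopens_Un clopens_compl G_clopen H_clopen)

lemma tba_con_mono: "\<theta> \<subseteq> \<theta>' \<Longrightarrow> tba_con \<theta> \<subseteq> tba_con \<theta>'"
  unfolding tba_con_def closed_points_def by blast

lemma whb_con_mono: "\<phi> \<subseteq> \<phi>' \<Longrightarrow> whb_con \<phi> \<subseteq> whb_con \<phi>'"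
  unfolding whb_con_def by blast

theorem lattice_iso_tba_con: "lattice_iso (Con_WHB A) (Con_TBA (TA A)) tba_con"
proof (rule lattice_iso_if_order_iso[where g = whb_con and s = UNIV and t = "clopens \<times> clopens"])
  show "\<forall>S\<subseteq>Con_WHB A. S \<noteq> {} \<longrightarrow> \<Inter>S \<in> Con_WHB A" using Con_WHB_Inter by blast
  show "\<forall>S\<subseteq>Con_TBA (TA A). S \<noteq> {} \<longrightarrow> \<Inter>S \<in> Con_TBA (TA A)" using Con_TBA_Inter by blast
  show "\<forall>\<phi>\<in>Con_TBA (TA A). \<phi> \<subseteq> clopens \<times> clopens" using Con_TBA_carrier by fast
qed (auto simp: tba_con_Con whb_con_Con whb_con_tba_con tba_con_whb_con tba_con_mono whb_con_mono
    UNIV_Con_WHB clopens_Con_TBA)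

end

lemma weak_hb_if_WHB_algebra: "WHB_algebra A \<Longrightarrow> weak_hb A"
  unfolding WHB_algebra_def weak_hb_def by (elim conjE) (intro conjI; blast)

theorem theorem6p6:
  fixes A :: "'a whb"
  assumes "WHB_algebra A"
  shows "\<exists>f. lattice_iso (Con_WHB A) (Con_TBA (TA A)) f"
  using weak_hb.lattice_iso_tba_con[OF weak_hb_if_WHB_algebra[OF assms]] by blast

end
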